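(* Let $d\ge1$, $n>0$ and $N=(d+1)n+d-1$. The number of maximal $d$-Brauer relations of an $N$-gon is $\frac{1}{n+1}\binom{(d+1)n+d-1}{n}$.
   Context: Let $\Pi$ be an $N$-gon with vertices numbered clockwise $1,\dots,N$ (mod $N$). A $d$-diagonal is a diagonal joining vertices $i$ and $i+d+j(d+1)$ for some $0\le j\le n-1$. A $d$-Brauer relation is a set of pairwise disjoint $d$-diagonals, and it is maximal if it is maximal with respect to inclusion. *)

theory Defs
  imports Complex_Main
begin

text \<open>Vertices of the N-gon are 1..N, numbered clockwise; addition is modulo N
  with representatives in 1..N.\<close>
definition vadd :: "nat \<Rightarrow> nat \<Rightarrow> nat \<Rightarrow> nat" where
  "vadd N i k = ((i - 1 + k) mod N) + 1"

definition d_diagonal :: "nat \<Rightarrow> nat \<Rightarrow> nat \<Rightarrow> nat set \<Rightarrow> bool" where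
  "d_diagonal N d n D \<longleftrightarrow>
     (\<exists>i\<in>{1..N}. \<exists>j<n. D = {i, vadd N i (d + j * (d + 1))})"

definition crosses :: "nat set \<Rightarrow> nat set \<Rightarrow> bool" where
  "crosses D E \<longleftrightarrow> (\<exists>a b c e. D = {a, b} \<and> E = {c, e} \<and> a < c \<and> c < b \<and> b < e)"

definition diag_disjoint :: "nat set \<Rightarrow> nat set \<Rightarrow> bool" where
  "diag_disjoint D E \<longleftrightarrow> D \<inter> E = {} \<and> \<not> crosses D E \<and> \<not> crosses E D"

definition brauer_relation :: "nat \<Rightarrow> nat \<Rightarrow> nat \<Rightarrow> nat set set \<Rightarrow> bool" where
  "brauer_relation N d n R \<longleftrightarrow>
     (\<forall>D\<in>R. d_diagonal N d n D) \<and>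
     (\<forall>D\<in>R. \<forall>E\<in>R. D \<noteq> E \<longrightarrow> diag_disjoint D E)"

definition maximal_brauer_relation :: "nat \<Rightarrow> nat \<Rightarrow> nat \<Rightarrow> nat set set \<Rightarrow> bool" where
  "maximal_brauer_relation N d n R \<longleftrightarrow>
     brauer_relation N d n R \<and> (\<forall>S. brauer_relation N d n S \<and> R \<subseteq> S \<longrightarrow> S = R)"

end

(* Cut the N-gon open between the vertices N and 1. Because N + 2 = (d + 1)(n + 1), a
   d-diagonal becomes an arc (x, y), x < y, of the segment 1..N enclosing a multiple of d + 1
   vertices (counting x and y), and a d-Brauer relation becomes a system of such arcs without
   crossings or common endpoints. Scanning a maximal system from the left, each vertex is either
   free or opens an arc whose inside is again maximal and has exactly d - 1 free outer vertices;
   on every level at most d vertices are free, since otherwise two of them could be joined.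
   This grammar (saturated) yields the recursion of the coefficients of B^(r+1), where
   B = 1 + x B^(d+1), for the number of maximal systems with r free outer vertices and k arcs.
   These are the Raney numbers (r+1)/((d+1)k+r+1) binom((d+1)k+r+1, k); the polygon has
   r = d - 1 and k = n. *)

theory Submission
  imports Defs
begin

section \<open>Arc systems on a segment\<close>

definition arcs_disjoint :: "nat \<Rightarrow> nat \<Rightarrow> nat \<Rightarrow> nat \<Rightarrow> bool" where
  "arcs_disjoint x y u v \<longleftrightarrow>
     x \<noteq> u \<and> x \<noteq> v \<and> y \<noteq> u \<and> y \<noteq> v \<and> \<not> (x < u \<and> u < y \<and> y < v) \<and> \<not> (u < x \<and> x < v \<and> v < y)"

definition d_arc :: "nat \<Rightarrow> nat \<Rightarrow> nat \<Rightarrow> nat \<Rightarrow> nat \<Rightarrow> bool" where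
  "d_arc d a b x y \<longleftrightarrow> a \<le> x \<and> x < y \<and> y < b \<and> (d + 1) dvd (y + 1 - x)"

definition arc_system :: "nat \<Rightarrow> nat \<Rightarrow> nat \<Rightarrow> (nat \<times> nat) set \<Rightarrow> bool" where
  "arc_system d a b P \<longleftrightarrow>
     (\<forall>x y. (x, y) \<in> P \<longrightarrow> d_arc d a b x y) \<and>
     (\<forall>x y u v. (x, y) \<in> P \<longrightarrow> (u, v) \<in> P \<longrightarrow> (x, y) \<noteq> (u, v) \<longrightarrow> arcs_disjoint x y u v)"

definition maximal_arc_system :: "nat \<Rightarrow> nat \<Rightarrow> nat \<Rightarrow> (nat \<times> nat) set \<Rightarrow> bool" where
  "maximal_arc_system d a b P \<longleftrightarrow>
     arc_system d a b P \<and> (\<forall>x y. (x, y) \<notin> P \<longrightarrow> \<not> arc_system d a b (insert (x, y) P))"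

definition outer_vertex :: "nat \<Rightarrow> (nat \<times> nat) set \<Rightarrow> bool" where
  "outer_vertex y P \<longleftrightarrow> (\<forall>p q. (p, q) \<in> P \<longrightarrow> p \<noteq> y \<and> q \<noteq> y \<and> \<not> (p < y \<and> y < q))"

lemma arcs_disjoint_sym: "arcs_disjoint x y u v \<longleftrightarrow> arcs_disjoint u v x y"
  unfolding arcs_disjoint_def by auto

lemma arc_system_insert:
  assumes "arc_system d a b P" "d_arc d a b x y" "\<forall>p q. (p, q) \<in> P \<longrightarrow> arcs_disjoint x y p q"
  shows "arc_system d a b (insert (x, y) P)"
  using assms unfolding arc_system_def by (metis insert_iff prod.inject arcs_disjoint_sym)

lemma arc_system_ordered: "arc_system d a b P \<Longrightarrow> \<forall>x y. (x, y) \<in> P \<longrightarrow> x < y"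
  unfolding arc_system_def d_arc_def by simp

section \<open>Saturated systems\<close>

text \<open>The maximal arc systems on \<open>[a, b)\<close> with \<open>r\<close> free outer vertices, generated from the
  left: the vertex \<open>a\<close> is either free or the left end of an arc whose inside has \<open>d - 1\<close>
  free outer vertices.\<close>
inductive saturated :: "nat \<Rightarrow> nat \<Rightarrow> nat \<Rightarrow> nat \<Rightarrow> (nat \<times> nat) set \<Rightarrow> bool" for d where
  empty: "saturated d 0 a a {}"
| free: "saturated d r (Suc a) b P \<Longrightarrow> r < d \<Longrightarrow> saturated d (Suc r) a b P"
| arc: "saturated d (d - 1) (Suc a) c P\<^sub>1 \<Longrightarrow> saturated d r (Suc c) b P\<^sub>2 \<Longrightarrow>
        saturated d r a b (insert (a, c) (P\<^sub>1 \<union> P\<^sub>2))"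

lemma saturated_le: "saturated d r a b P \<Longrightarrow> a \<le> b"
  by (induction rule: saturated.induct) auto

lemma saturated_finite: "saturated d r a b P \<Longrightarrow> finite P"
  by (induction rule: saturated.induct) auto

lemma saturated_bounds: "saturated d r a b P \<Longrightarrow> (x, y) \<in> P \<Longrightarrow> a \<le> x \<and> x < y \<and> y < b"
proof (induction arbitrary: x y rule: saturated.induct)
  case (arc a c P\<^sub>1 r b P\<^sub>2)
  then show ?case using saturated_le[OF arc.hyps(1)] saturated_le[OF arc.hyps(2)] by fastforce
qed fastforce+

lemma saturated_card:
  assumes "saturated d r a b P" "d \<ge> 1"
  shows "b = a + r + (d + 1) * card P"
  using assms
proof (induction rule: saturated.induct)
  case (arc a c P\<^sub>1 r b P\<^sub>2)
  have "P\<^sub>1 \<inter> P\<^sub>2 = {}" "(a, c) \<notin> P\<^sub>1 \<union> P\<^sub>2"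
    using saturated_bounds[OF arc.hyps(1)] saturated_bounds[OF arc.hyps(2)] by fastforce+
  then have "card (insert (a, c) (P\<^sub>1 \<union> P\<^sub>2)) = Suc (card P\<^sub>1 + card P\<^sub>2)"
    using saturated_finite[OF arc.hyps(1)] saturated_finite[OF arc.hyps(2)]
    by (simp add: card_Un_disjoint)
  then show ?case using arc by (simp add: algebra_simps)
qed auto

lemma saturated_d_arc:
  assumes "saturated d r a b P" "d \<ge> 1" "(x, y) \<in> P"
  shows "d_arc d a b x y"
  using assms
proof (induction arbitrary: x y rule: saturated.induct)
  case (arc a c P\<^sub>1 r b P\<^sub>2)
  have "c + 1 - a = (d + 1) * Suc (card P\<^sub>1)"
    using saturated_card[OF arc.hyps(1) arc.prems(1)] arc.prems(1) by simp
  moreover have "a < c \<and> c < b"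
    using saturated_bounds[OF saturated.arc[OF arc.hyps], of a c] by simp
  ultimately have "d_arc d a b a c" unfolding d_arc_def by (metis dvd_triv_left order_refl)
  then show ?case using arc unfolding d_arc_def by fastforce
qed (fastforce simp: d_arc_def)+

lemma arcs_disjoint_if_separated: "x < y \<Longrightarrow> y < u \<Longrightarrow> u < v \<Longrightarrow> arcs_disjoint x y u v"
  and arcs_disjoint_if_nested: "x < u \<Longrightarrow> u < v \<Longrightarrow> v < y \<Longrightarrow> arcs_disjoint x y u v"
  by (auto simp: arcs_disjoint_def)

lemma saturated_arcs_disjoint:
  "saturated d r a b P \<Longrightarrow> (x, y) \<in> P \<Longrightarrow> (u, v) \<in> P \<Longrightarrow> (x, y) \<noteq> (u, v) \<Longrightarrow>
   arcs_disjoint x y u v"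
proof (induction arbitrary: x y u v rule: saturated.induct)
  case (arc a c P\<^sub>1 r b P\<^sub>2)
  have inside: "Suc a \<le> p \<and> p < q \<and> q < c" if "(p, q) \<in> P\<^sub>1" for p q
    using saturated_bounds[OF arc.hyps(1) that] .
  have outside: "Suc c \<le> p \<and> p < q" if "(p, q) \<in> P\<^sub>2" for p q
    using saturated_bounds[OF arc.hyps(2) that] by simp
  have "a < c" using saturated_bounds[OF saturated.arc[OF arc.hyps], of a c] by simp
  have sep: "arcs_disjoint p q p' q'" if "(p, q) \<in> P\<^sub>1" "(p', q') \<in> P\<^sub>2" for p q p' q'
    using inside[OF that(1)] outside[OF that(2)] by (intro arcs_disjoint_if_separated) auto
  have nest: "arcs_disjoint a c p q" if "(p, q) \<in> P\<^sub>1" for p q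
    using inside[OF that] by (intro arcs_disjoint_if_nested) auto
  have sep': "arcs_disjoint a c p q" if "(p, q) \<in> P\<^sub>2" for p q
    using outside[OF that] \<open>a < c\<close> by (intro arcs_disjoint_if_separated) auto
  from arc.prems(1,2) show ?case
  proof (elim insertE UnE)
    assume "(x, y) = (a, c)" "(u, v) = (a, c)"
    then show ?thesis using arc.prems(3) by simp
  next
    assume "(x, y) = (a, c)" "(u, v) \<in> P\<^sub>1"
    then show ?thesis using nest by simp
  next
    assume "(x, y) = (a, c)" "(u, v) \<in> P\<^sub>2"
    then show ?thesis using sep' by simp
  next
    assume "(x, y) \<in> P\<^sub>1" "(u, v) = (a, c)"
    then show ?thesis using nest arcs_disjoint_sym by (metis prod.inject)
  next
    assume "(x, y) \<in> P\<^sub>2" "(u, v) = (a, c)"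
    then show ?thesis using sep' arcs_disjoint_sym by (metis prod.inject)
  next
    assume "(x, y) \<in> P\<^sub>1" "(u, v) \<in> P\<^sub>1"
    then show ?thesis using arc.IH(1) arc.prems(3) by blast
  next
    assume "(x, y) \<in> P\<^sub>2" "(u, v) \<in> P\<^sub>2"
    then show ?thesis using arc.IH(2) arc.prems(3) by blast
  next
    assume "(x, y) \<in> P\<^sub>1" "(u, v) \<in> P\<^sub>2"
    then show ?thesis using sep by blast
  next
    assume "(x, y) \<in> P\<^sub>2" "(u, v) \<in> P\<^sub>1"
    then show ?thesis using sep arcs_disjoint_sym by blast
  qed
qed auto

lemma saturated_arc_system: "saturated d r a b P \<Longrightarrow> d \<ge> 1 \<Longrightarrow> arc_system d a b P"
  unfolding arc_system_def using saturated_d_arc saturated_arcs_disjoint by blast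

lemma saturated_outer_vertex_mod:
  assumes "saturated d r a b P" "d \<ge> 1" "a \<le> y" "y < b" "outer_vertex y P"
  shows "1 \<le> (y + 1 - a) mod (d + 1) \<and> (y + 1 - a) mod (d + 1) \<le> r"
  using assms
proof (induction arbitrary: y rule: saturated.induct)
  case (free r a b P)
  show ?case
  proof (cases "y = a")
    case False
    then have "Suc a \<le> y" using free by simp
    then have "y + 1 - a = Suc (y + 1 - Suc a)" "1 \<le> (y + 1 - Suc a) mod (d + 1)"
        "(y + 1 - Suc a) mod (d + 1) \<le> r"
      using free by auto
    then show ?thesis using free.hyps(2) by (simp add: mod_Suc)
  qed (use free in simp)
next
  case (arc a c P\<^sub>1 r b P\<^sub>2)
  have "y \<noteq> a" "y \<noteq> c" "\<not> (a < y \<and> y < c)"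
    using arc.prems(4) unfolding outer_vertex_def by blast+
  then have "Suc c \<le> y" using arc.prems(2) by linarith
  moreover have "outer_vertex y P\<^sub>2" using arc.prems(4) unfolding outer_vertex_def by blast
  ultimately have "1 \<le> (y + 1 - Suc c) mod (d + 1) \<and> (y + 1 - Suc c) mod (d + 1) \<le> r"
    using arc by blast
  moreover have "y + 1 - a = (y + 1 - Suc c) + (d + 1) * Suc (card P\<^sub>1)"
    using \<open>Suc c \<le> y\<close> saturated_card[OF arc.hyps(1) arc.prems(1)] arc.prems(1) by simp
  then have "(y + 1 - a) mod (d + 1) = (y + 1 - Suc c) mod (d + 1)" by (simp only: mod_mult_self2)
  ultimately show ?case by simp
qed simp

lemma saturated_no_extension:
  assumes "saturated d r a b P" "d \<ge> 1" "d_arc d a b x y"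
    and "\<forall>p q. (p, q) \<in> P \<longrightarrow> arcs_disjoint x y p q"
  shows False
  using assms
proof (induction arbitrary: x y rule: saturated.induct)
  case (free r a b P)
  show ?case
  proof (cases "x = a")
    case True
    have "outer_vertex y P"
      unfolding outer_vertex_def
    proof (intro allI impI)
      fix p q assume "(p, q) \<in> P"
      then show "p \<noteq> y \<and> q \<noteq> y \<and> \<not> (p < y \<and> y < q)"
        using free.prems(3) saturated_bounds[OF free.hyps(1)] True
        unfolding arcs_disjoint_def by (metis Suc_le_eq)
    qed
    then have "1 \<le> (y + 1 - Suc a) mod (d + 1)" "(y + 1 - Suc a) mod (d + 1) \<le> r"
      using saturated_outer_vertex_mod[OF free.hyps(1) free.prems(1), of y] free.prems(2) True
      unfolding d_arc_def by auto
    moreover have "y + 1 - x = Suc (y + 1 - Suc a)"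
      using True free.prems(2) unfolding d_arc_def by auto
    ultimately have "(y + 1 - x) mod (d + 1) \<noteq> 0" using free.hyps(2) by (simp add: mod_Suc)
    then show False using free.prems(2) unfolding d_arc_def by simp
  next
    case False
    then have "d_arc d (Suc a) b x y" using free.prems(2) unfolding d_arc_def by auto
    then show False using free by blast
  qed
next
  case (arc a c P\<^sub>1 r b P\<^sub>2)
  then have "x \<noteq> a" "x \<noteq> c" "y \<noteq> c" "\<not> (a < x \<and> x < c \<and> c < y)"
    unfolding arcs_disjoint_def by auto
  then have "d_arc d (Suc a) c x y \<or> d_arc d (Suc c) b x y"
    using arc.prems(2) unfolding d_arc_def by (cases "x < c") auto
  then show ?case using arc by blast
qed (auto simp: d_arc_def)

lemma saturated_maximal: "saturated d r a b P \<Longrightarrow> d \<ge> 1 \<Longrightarrow> maximal_arc_system d a b P"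
  unfolding maximal_arc_system_def
  by (metis saturated_arc_system saturated_no_extension arc_system_def insertCI)

lemma saturated_last_outer_vertex:
  assumes "saturated d r a b P" "d \<ge> 1" "1 \<le> r"
  shows "\<exists>y. a \<le> y \<and> y < b \<and> outer_vertex y P \<and> (y + 1 - a) mod (d + 1) = r"
  using assms
proof (induction rule: saturated.induct)
  case (free r a b P)
  show ?case
  proof (cases "r = 0")
    case True
    have "outer_vertex a P" using saturated_bounds[OF free.hyps(1)] unfolding outer_vertex_def by fastforce
    then show ?thesis using True free.prems saturated_card[OF free.hyps(1)] by (intro exI[of _ a]) auto
  next
    case False
    then obtain y where "Suc a \<le> y" "y < b" "outer_vertex y P" "(y + 1 - Suc a) mod (d + 1) = r"
      using free by auto
    moreover from this have "y + 1 - a = Suc (y + 1 - Suc a)" by simp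
    ultimately show ?thesis using free.hyps(2) by (intro exI[of _ y]) (auto simp: mod_Suc)
  qed
next
  case (arc a c P\<^sub>1 r b P\<^sub>2)
  obtain y where y: "Suc c \<le> y" "y < b" "outer_vertex y P\<^sub>2" "(y + 1 - Suc c) mod (d + 1) = r"
    using arc by auto
  have "y + 1 - a = (y + 1 - Suc c) + (d + 1) * Suc (card P\<^sub>1)"
    using y(1) saturated_card[OF arc.hyps(1) arc.prems(1)] arc.prems(1) by simp
  then have "(y + 1 - a) mod (d + 1) = r" using y(4) by (simp only: mod_mult_self2)
  moreover have "outer_vertex y (insert (a, c) (P\<^sub>1 \<union> P\<^sub>2))"
    using y saturated_bounds[OF arc.hyps(1)] saturated_le[OF arc.hyps(1)]
    unfolding outer_vertex_def by fastforce
  ultimately show ?case using y saturated_le[OF arc.hyps(1)] by (intro exI[of _ y]) auto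
qed simp

section \<open>Maximal systems are saturated\<close>

lemma saturated_extend_at_left:
  assumes "saturated d d (Suc a) b P" "d \<ge> 1"
  shows "\<exists>y. d_arc d a b a y \<and> (\<forall>p q. (p, q) \<in> P \<longrightarrow> arcs_disjoint a y p q)"
proof -
  obtain y where y: "Suc a \<le> y" "y < b" "outer_vertex y P" "(y + 1 - Suc a) mod (d + 1) = d"
    using saturated_last_outer_vertex[OF assms] assms(2) by auto
  have "y + 1 - a = Suc (y + 1 - Suc a)" using y(1) by simp
  then have "(d + 1) dvd (y + 1 - a)" using y(4) by (simp add: mod_Suc dvd_eq_mod_eq_0)
  then have "d_arc d a b a y" using y(1,2) unfolding d_arc_def by simp
  moreover have "arcs_disjoint a y p q" if "(p, q) \<in> P" for p q
    using y(3) that saturated_bounds[OF assms(1) that]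
    unfolding outer_vertex_def arcs_disjoint_def by fastforce
  ultimately show ?thesis by blast
qed

lemma maximal_arc_system_restrict:
  assumes max: "maximal_arc_system d a b P" and "a \<le> a'" "b' \<le> b"
    and compatible: "\<And>p q x y. (p, q) \<in> P \<Longrightarrow> \<not> (a' \<le> p \<and> q < b') \<Longrightarrow>
      a' \<le> x \<Longrightarrow> x < y \<Longrightarrow> y < b' \<Longrightarrow> arcs_disjoint x y p q"
  shows "maximal_arc_system d a' b' {p \<in> P. a' \<le> fst p \<and> snd p < b'}"
    (is "maximal_arc_system d a' b' ?Q")
proof -
  have sys: "arc_system d a b P" using max unfolding maximal_arc_system_def by blast
  then have "arc_system d a' b' ?Q" unfolding arc_system_def d_arc_def by auto
  moreover have "\<not> arc_system d a' b' (insert (x, y) ?Q)" if "(x, y) \<notin> ?Q" for x y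
  proof
    assume ext: "arc_system d a' b' (insert (x, y) ?Q)"
    then have xy: "d_arc d a' b' x y" unfolding arc_system_def by blast
    then have "(x, y) \<notin> P" using that unfolding d_arc_def by auto
    moreover have "arc_system d a b (insert (x, y) P)"
    proof (rule arc_system_insert[OF sys])
      show "d_arc d a b x y" using xy assms(2,3) unfolding d_arc_def by auto
      show "\<forall>p q. (p, q) \<in> P \<longrightarrow> arcs_disjoint x y p q"
        using ext that compatible xy unfolding arc_system_def d_arc_def by (metis (mono_tags) case_prodI
            fst_conv insert_iff mem_Collect_eq snd_conv)
    qed
    ultimately show False using max unfolding maximal_arc_system_def by blast
  qed
  ultimately show ?thesis unfolding maximal_arc_system_def by blast
qed

lemma maximal_arc_system_split_at_arc:
  assumes max: "maximal_arc_system d a b P" and "(a, c) \<in> P"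
  defines "P\<^sub>1 \<equiv> {p \<in> P. Suc a \<le> fst p \<and> snd p < c}" and "P\<^sub>2 \<equiv> {p \<in> P. Suc c \<le> fst p \<and> snd p < b}"
  shows "P = insert (a, c) (P\<^sub>1 \<union> P\<^sub>2)"
    and "maximal_arc_system d (Suc a) c P\<^sub>1"
    and "maximal_arc_system d (Suc c) b P\<^sub>2"
proof -
  have sys: "arc_system d a b P" using max unfolding maximal_arc_system_def by blast
  have arcs: "d_arc d a b x y" if "(x, y) \<in> P" for x y
    using sys that unfolding arc_system_def by blast
  have disj: "arcs_disjoint a c x y" if "(x, y) \<in> P" "(x, y) \<noteq> (a, c)" for x y
    using sys that \<open>(a, c) \<in> P\<close> unfolding arc_system_def by blast
  have "a < c" "c < b" using arcs[OF \<open>(a, c) \<in> P\<close>] unfolding d_arc_def by auto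
  show "P = insert (a, c) (P\<^sub>1 \<union> P\<^sub>2)"
  proof (intro set_eqI iffI)
    fix p assume "p \<in> P"
    moreover obtain x y where "p = (x, y)" by fastforce
    ultimately show "p \<in> insert (a, c) (P\<^sub>1 \<union> P\<^sub>2)"
      using disj[of x y] arcs[of x y] unfolding P\<^sub>1_def P\<^sub>2_def arcs_disjoint_def d_arc_def by auto
  qed (use \<open>(a, c) \<in> P\<close> in \<open>auto simp: P\<^sub>1_def P\<^sub>2_def\<close>)
  show "maximal_arc_system d (Suc a) c P\<^sub>1"
    unfolding P\<^sub>1_def
  proof (rule maximal_arc_system_restrict[OF max])
    fix p q x y assume "(p, q) \<in> P" "\<not> (Suc a \<le> p \<and> q < c)" "Suc a \<le> x" "x < y" "y < c"
    then show "arcs_disjoint x y p q"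
      using disj[of p q] arcs[of p q] unfolding arcs_disjoint_def d_arc_def by force
  qed (use \<open>c < b\<close> in auto)
  show "maximal_arc_system d (Suc c) b P\<^sub>2"
    unfolding P\<^sub>2_def
  proof (rule maximal_arc_system_restrict[OF max])
    fix p q x y assume "(p, q) \<in> P" "\<not> (Suc c \<le> p \<and> q < b)" "Suc c \<le> x" "x < y" "y < b"
    then show "arcs_disjoint x y p q"
      using disj[of p q] arcs[of p q] unfolding arcs_disjoint_def d_arc_def by force
  qed (use \<open>a < c\<close> in auto)
qed

lemma maximal_arc_system_skip:
  assumes max: "maximal_arc_system d a b P" and unmatched: "\<And>c. (a, c) \<notin> P"
  shows "maximal_arc_system d (Suc a) b P"
proof -
  have arcs: "d_arc d a b x y" if "(x, y) \<in> P" for x y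
    using max that unfolding maximal_arc_system_def arc_system_def by blast
  then have inner: "Suc a \<le> p \<and> q < b" if "(p, q) \<in> P" for p q
    using that unmatched[of q] unfolding d_arc_def by (metis Suc_leI le_neq_implies_less)
  then have "{p \<in> P. Suc a \<le> fst p \<and> snd p < b} = P" by fastforce
  then show ?thesis using maximal_arc_system_restrict[OF max, of "Suc a" b] inner by auto
qed

lemma arc_interval_mods:
  assumes "d \<ge> 1" "a < c" "c < b" "(d + 1) dvd (c + 1 - a)"
  shows "(c - Suc a) mod (d + 1) = d - 1" and "(b - Suc c) mod (d + 1) = (b - a) mod (d + 1)"
proof -
  obtain s where s: "c + 1 - a = (d + 1) * s" using assms(4) by (auto elim: dvdE)
  have "c + 1 - a > 0" using assms(2) by simp
  then have "s \<noteq> 0" using s by (metis mult_0_right less_irrefl)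
  then obtain t where t: "c + 1 - a = (d + 1) * Suc t" using s not0_implies_Suc by blast
  have "c - Suc a = (d - 1) + (d + 1) * t" "b - a = (b - Suc c) + (d + 1) * Suc t"
    using t assms by (simp_all add: algebra_simps)
  then show "(c - Suc a) mod (d + 1) = d - 1" "(b - Suc c) mod (d + 1) = (b - a) mod (d + 1)"
    using assms(1) by (simp_all only: mod_mult_self2) simp
qed

lemma maximal_arc_system_saturated:
  assumes "maximal_arc_system d a b P" "d \<ge> 1" "a \<le> b"
  shows "saturated d ((b - a) mod (d + 1)) a b P"
  using assms
proof (induction "b - a" arbitrary: a b P rule: less_induct)
  case less
  have sys: "arc_system d a b P" using less.prems(1) unfolding maximal_arc_system_def by blast
  consider "a = b" | c where "(a, c) \<in> P" | "a < b" "\<And>c. (a, c) \<notin> P"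
    using less.prems(3) by force
  then show ?case
  proof cases
    case 1
    then have "P = {}" using sys unfolding arc_system_def d_arc_def by fastforce
    then show ?thesis using 1 by (simp add: saturated.empty)
  next
    case (2 c)
    have ac: "a < c" "c < b" "(d + 1) dvd (c + 1 - a)"
      using sys 2 unfolding arc_system_def d_arc_def by auto
    note split = maximal_arc_system_split_at_arc[OF less.prems(1) 2]
    have "c - Suc a < b - a" "b - Suc c < b - a" using ac by auto
    then have "saturated d (d - 1) (Suc a) c {p \<in> P. Suc a \<le> fst p \<and> snd p < c}"
        "saturated d ((b - a) mod (d + 1)) (Suc c) b {p \<in> P. Suc c \<le> fst p \<and> snd p < b}"
      using less.hyps[OF _ split(2) less.prems(2)] less.hyps[OF _ split(3) less.prems(2)]
        arc_interval_mods[OF less.prems(2) ac] ac by simp_all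
    then show ?thesis by (subst split(1)) (rule saturated.arc)
  next
    case 3
    then have sat: "saturated d ((b - Suc a) mod (d + 1)) (Suc a) b P"
      using less.hyps maximal_arc_system_skip[OF less.prems(1)] less.prems(2) by simp
    moreover have "b - a = Suc (b - Suc a)" using 3(1) by simp
    moreover have "(b - Suc a) mod (d + 1) \<noteq> d"
    proof
      assume "(b - Suc a) mod (d + 1) = d"
      with sat have "saturated d d (Suc a) b P" by simp
      then obtain y where "d_arc d a b a y" "\<forall>p q. (p, q) \<in> P \<longrightarrow> arcs_disjoint a y p q"
        using saturated_extend_at_left less.prems(2) by blast
      then have "arc_system d a b (insert (a, y) P)" by (rule arc_system_insert[OF sys])
      then show False using less.prems(1) 3(2) unfolding maximal_arc_system_def by blast
    qed
    then have "(b - Suc a) mod (d + 1) < d" using mod_less_divisor[of "d + 1" "b - Suc a"] by linarith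
    moreover note saturated.free[OF sat this]
    ultimately show ?thesis by (simp add: mod_Suc)
  qed
qed

lemma maximal_arc_system_iff_saturated:
  assumes "d \<ge> 1" "a \<le> b"
  shows "maximal_arc_system d a b P \<longleftrightarrow> saturated d ((b - a) mod (d + 1)) a b P"
  using maximal_arc_system_saturated[OF _ assms] saturated_maximal[OF _ assms(1)] by blast

section \<open>Raney numbers\<close>

text \<open>\<open>arc_count d r k\<close> is the coefficient of \<open>x\<^sup>k\<close> in \<open>B\<^bsup>r+1\<^esup>\<close>, where
  \<open>B = 1 + x B\<^bsup>d+1\<^esup>\<close>; the last two equations are this identity and
  \<open>B\<^bsup>r+2\<^esup> = B\<^bsup>r+1\<^esup> B\<close>.\<close>
fun arc_count :: "nat \<Rightarrow> nat \<Rightarrow> nat \<Rightarrow> nat" where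
  "arc_count d r 0 = 1"
| "arc_count d 0 (Suc k) = arc_count d d k"
| "arc_count d (Suc r) (Suc k) = arc_count d r (Suc k) + arc_count d (Suc r + d) k"

lemma arc_count_convolution:
  "(\<Sum>i\<le>k. arc_count d a i * arc_count d b (k - i)) = arc_count d (a + b + 1) k"
proof (induction k arbitrary: a b)
  case (Suc k)
  note outer_IH = Suc.IH
  show ?case
  proof (induction a arbitrary: b)
    case 0
    have "(\<Sum>i\<le>Suc k. arc_count d 0 i * arc_count d b (Suc k - i))
        = arc_count d b (Suc k) + (\<Sum>i\<le>k. arc_count d d i * arc_count d b (k - i))"
      by (subst sum.atMost_Suc_shift) simp
    also have "\<dots> = arc_count d (0 + b + 1) (Suc k)" using outer_IH by (simp add: algebra_simps)
    finally show ?case .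
  next
    case (Suc a)
    have "(\<Sum>i\<le>Suc k. arc_count d (Suc a) i * arc_count d b (Suc k - i))
        = arc_count d b (Suc k) + (\<Sum>i\<le>k. arc_count d a (Suc i) * arc_count d b (k - i))
          + (\<Sum>i\<le>k. arc_count d (Suc a + d) i * arc_count d b (k - i))"
      by (subst sum.atMost_Suc_shift) (simp add: sum.distrib algebra_simps)
    also have "\<dots> = (\<Sum>i\<le>Suc k. arc_count d a i * arc_count d b (Suc k - i))
          + arc_count d (Suc a + d + b + 1) k"
      using outer_IH[of "Suc a + d" b] by (subst sum.atMost_Suc_shift) simp
    also have "\<dots> = arc_count d (Suc a + b + 1) (Suc k)"
      using Suc.IH by (simp add: algebra_simps)
    finally show ?case .
  qed
qed simp

lemma arc_count_closed_form:
  "((d + 1) * k + r + 1) * arc_count d r k = (r + 1) * (((d + 1) * k + r + 1) choose k)"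
proof (induction d r k rule: arc_count.induct)
  case (2 d k)
  define M where "M = (d + 1) * Suc k"
  have "(d + 1) * (Suc k * arc_count d d k) = (d + 1) * (M choose k)"
    using 2 unfolding M_def by (simp add: algebra_simps)
  then have "Suc k * arc_count d d k = M choose k" by (subst (asm) mult_left_cancel) simp_all
  then have "Suc k * (Suc M * arc_count d d k) = Suc k * (Suc M choose Suc k)"
    using Suc_times_binomial_eq[of M k] by (metis mult.commute mult.left_commute)
  then have "Suc M * arc_count d d k = Suc M choose Suc k" by (subst (asm) mult_left_cancel) simp_all
  then show ?case unfolding M_def by (simp add: algebra_simps)
next
  case (3 d r k)
  define M where "M = (d + 1) * Suc k + r + 1"
  define C where "C = Suc M choose Suc k"
  have IH: "M * arc_count d r (Suc k) = (r + 1) * (M choose Suc k)"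
      "M * arc_count d (Suc r + d) k = (r + d + 2) * (M choose k)"
    using 3 unfolding M_def by (simp_all add: algebra_simps)
  have B1: "Suc M * (M choose k) = C * Suc k"
    unfolding C_def by (rule Suc_times_binomial_eq)
  have B2: "(Suc M - Suc k) * C = Suc M * (M choose Suc k)"
    using binomial_absorb_comp[of "Suc M" "Suc k"] unfolding C_def by simp
  have "Suc M - Suc k = d * Suc k + r + 2" unfolding M_def by simp
  have "M * (Suc M * arc_count d (Suc r) (Suc k))
      = Suc M * (M * arc_count d r (Suc k)) + Suc M * (M * arc_count d (Suc r + d) k)"
    by (simp add: algebra_simps)
  also have "\<dots> = (r + 1) * (Suc M * (M choose Suc k)) + (r + d + 2) * (Suc M * (M choose k))"
    unfolding IH by (simp add: algebra_simps)
  also have "\<dots> = (r + 1) * ((d * Suc k + r + 2) * C) + (r + d + 2) * (C * Suc k)"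
    unfolding B1 B2[symmetric] \<open>Suc M - Suc k = d * Suc k + r + 2\<close> ..
  also have "\<dots> = M * ((r + 2) * C)" unfolding M_def by (simp add: algebra_simps)
  finally have "Suc M * arc_count d (Suc r) (Suc k) = (r + 2) * C"
    unfolding M_def by (subst (asm) mult_left_cancel) simp_all
  then show ?case unfolding M_def C_def by (simp add: algebra_simps)
qed simp

lemma arc_count_fuss_catalan:
  assumes "d \<ge> 1"
  shows "(n + 1) * arc_count d (d - 1) n = ((d + 1) * n + d - 1) choose n"
proof -
  define L where "L = (d + 1) * n + d"
  have "L * ((n + 1) * arc_count d (d - 1) n) = (n + 1) * (d * (L choose n))"
    using arc_count_closed_form[of d n "d - 1"] assms unfolding L_def by (simp add: algebra_simps)
  also have "\<dots> = (L - n) * (L choose n)" unfolding L_def by (simp add: algebra_simps)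
  also have "\<dots> = L * ((L - 1) choose n)" by (rule binomial_absorb_comp)
  finally have "(n + 1) * arc_count d (d - 1) n = (L - 1) choose n"
    using assms unfolding L_def by simp
  then show ?thesis unfolding L_def by simp
qed

lemma arc_count_recursion:
  assumes "d \<ge> 1"
  shows "arc_count d r k = (if r = 0 \<and> k = 0 then 1 else 0) + (if 1 \<le> r then arc_count d (r - 1) k else 0)
    + (\<Sum>i<k. arc_count d (d - 1) i * arc_count d r (k - 1 - i))"
proof (cases k)
  case (Suc k')
  have "(\<Sum>i<k. arc_count d (d - 1) i * arc_count d r (k - 1 - i)) = arc_count d (d - 1 + r + 1) k'"
    unfolding Suc lessThan_Suc_atMost by (simp add: arc_count_convolution)
  also have "\<dots> = arc_count d (r + d) k'" using assms by (simp add: algebra_simps)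
  finally show ?thesis using Suc by (cases r) (simp_all add: algebra_simps)
qed (cases r; simp)

section \<open>Counting saturated systems\<close>

lemma finite_saturated_systems: "finite {P. saturated d r a b P}"
proof (rule finite_subset)
  show "{P. saturated d r a b P} \<subseteq> Pow ({a..<b} \<times> {a..<b})"
    using saturated_bounds by fastforce
qed simp

definition join_arc :: "nat \<Rightarrow> nat \<Rightarrow> (nat \<times> nat) set \<times> (nat \<times> nat) set \<Rightarrow> (nat \<times> nat) set" where
  "join_arc a c = (\<lambda>(P\<^sub>1, P\<^sub>2). insert (a, c) (P\<^sub>1 \<union> P\<^sub>2))"

lemma saturated_set_eq:
  "{P. saturated d r a b P} = (if r = 0 \<and> a = b then {{}} else {})
     \<union> (if 1 \<le> r \<and> r \<le> d then {P. saturated d (r - 1) (Suc a) b P} else {})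
     \<union> (\<Union>c\<in>{a<..<b}.
          join_arc a c ` ({P. saturated d (d - 1) (Suc a) c P} \<times> {P. saturated d r (Suc c) b P}))"
  (is "?S = ?A \<union> ?B \<union> ?C")
proof (intro set_eqI iffI)
  fix P assume "P \<in> ?S"
  then have "saturated d r a b P" by simp
  then show "P \<in> ?A \<union> ?B \<union> ?C"
  proof cases
    case (arc c P\<^sub>1 P\<^sub>2)
    then have "c \<in> {a<..<b}" using saturated_le[OF arc(2)] saturated_le[OF arc(3)] by simp
    moreover have "P = join_arc a c (P\<^sub>1, P\<^sub>2)" using arc(1) unfolding join_arc_def by simp
    moreover have "(P\<^sub>1, P\<^sub>2) \<in> {P. saturated d (d - 1) (Suc a) c P} \<times> {P. saturated d r (Suc c) b P}"
      using arc(2,3) by simp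
    ultimately have "P \<in> ?C" by blast
    then show ?thesis by (rule UnI2)
  qed simp_all
next
  fix P assume "P \<in> ?A \<union> ?B \<union> ?C"
  then show "P \<in> ?S"
  proof (elim UnE)
    assume "P \<in> ?A"
    then show ?thesis by (simp add: saturated.empty split: if_splits)
  next
    assume "P \<in> ?B"
    then have "saturated d (r - 1) (Suc a) b P" "r - 1 < d" "Suc (r - 1) = r" by (simp_all split: if_splits)
    then show ?thesis using saturated.free[of d "r - 1" a b P] by simp
  next
    assume "P \<in> ?C"
    then obtain c P\<^sub>1 P\<^sub>2 where "P = insert (a, c) (P\<^sub>1 \<union> P\<^sub>2)"
      "saturated d (d - 1) (Suc a) c P\<^sub>1" "saturated d r (Suc c) b P\<^sub>2"
      unfolding join_arc_def by auto
    then show ?thesis using saturated.arc by simp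
  qed
qed

lemma join_arc_parts:
  assumes "saturated d r\<^sub>1 (Suc a) c P\<^sub>1" "saturated d r\<^sub>2 (Suc c) b P\<^sub>2"
  shows "P\<^sub>1 = {p \<in> join_arc a c (P\<^sub>1, P\<^sub>2). snd p < c}"
    and "P\<^sub>2 = {p \<in> join_arc a c (P\<^sub>1, P\<^sub>2). c < fst p}"
    and "(a, c') \<in> join_arc a c (P\<^sub>1, P\<^sub>2) \<Longrightarrow> c' = c"
proof -
  have inside: "a < x \<and> x < y \<and> y < c" if "(x, y) \<in> P\<^sub>1" for x y
    using saturated_bounds[OF assms(1) that] by simp
  have outside: "c < x \<and> x < y" if "(x, y) \<in> P\<^sub>2" for x y
    using saturated_bounds[OF assms(2) that] by simp
  have "a < c" using saturated_le[OF assms(1)] by simp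
  then show "P\<^sub>1 = {p \<in> join_arc a c (P\<^sub>1, P\<^sub>2). snd p < c}"
    and "P\<^sub>2 = {p \<in> join_arc a c (P\<^sub>1, P\<^sub>2). c < fst p}"
    and "(a, c') \<in> join_arc a c (P\<^sub>1, P\<^sub>2) \<Longrightarrow> c' = c"
    unfolding join_arc_def by (auto dest: inside outside)
qed

lemma card_UN_join_arc:
  "card (\<Union>c\<in>{a<..<b}. join_arc a c ` ({P. saturated d (d - 1) (Suc a) c P} \<times> {P. saturated d r (Suc c) b P}))
    = (\<Sum>c\<in>{a<..<b}. card {P. saturated d (d - 1) (Suc a) c P} * card {P. saturated d r (Suc c) b P})"
proof -
  let ?D = "\<lambda>c. {P. saturated d (d - 1) (Suc a) c P} \<times> {P. saturated d r (Suc c) b P}"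
  have inj: "inj_on (join_arc a c) (?D c)" for c
  proof (rule inj_onI)
    fix X Y assume X: "X \<in> ?D c" and Y: "Y \<in> ?D c" and eq: "join_arc a c X = join_arc a c Y"
    obtain P\<^sub>1 P\<^sub>2 Q\<^sub>1 Q\<^sub>2 where "X = (P\<^sub>1, P\<^sub>2)" "Y = (Q\<^sub>1, Q\<^sub>2)" by fastforce
    with X Y eq show "X = Y"
      using join_arc_parts(1,2)[of d _ a c P\<^sub>1 _ b P\<^sub>2] join_arc_parts(1,2)[of d _ a c Q\<^sub>1 _ b Q\<^sub>2] by auto
  qed
  have "card (\<Union>c\<in>{a<..<b}. join_arc a c ` ?D c) = (\<Sum>c\<in>{a<..<b}. card (join_arc a c ` ?D c))"
  proof (rule card_UN_disjoint)
    show "\<forall>c\<in>{a<..<b}. finite (join_arc a c ` ?D c)" using finite_saturated_systems by simp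
    show "\<forall>c\<in>{a<..<b}. \<forall>c'\<in>{a<..<b}. c \<noteq> c' \<longrightarrow> join_arc a c ` ?D c \<inter> join_arc a c' ` ?D c' = {}"
    proof (intro ballI impI Int_emptyI)
      fix c c' P assume "c \<noteq> c'" "P \<in> join_arc a c ` ?D c" "P \<in> join_arc a c' ` ?D c'"
      moreover from this obtain P\<^sub>1 P\<^sub>2 where "P = join_arc a c (P\<^sub>1, P\<^sub>2)"
        "saturated d (d - 1) (Suc a) c P\<^sub>1" "saturated d r (Suc c) b P\<^sub>2" by auto
      moreover have "(a, c') \<in> P" using calculation(3) unfolding join_arc_def by auto
      ultimately show False using join_arc_parts(3) by metis
    qed
  qed simp
  also have "\<dots> = (\<Sum>c\<in>{a<..<b}. card {P. saturated d (d - 1) (Suc a) c P} * card {P. saturated d r (Suc c) b P})"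
    using inj by (simp add: card_image card_cartesian_product)
  finally show ?thesis .
qed

lemma card_saturated_recursion:
  "card {P. saturated d r a b P} = (if r = 0 \<and> a = b then 1 else 0)
     + (if 1 \<le> r \<and> r \<le> d then card {P. saturated d (r - 1) (Suc a) b P} else 0)
     + (\<Sum>c\<in>{a<..<b}. card {P. saturated d (d - 1) (Suc a) c P} * card {P. saturated d r (Suc c) b P})"
proof -
  let ?A = "if r = 0 \<and> a = b then {{}} else {} :: (nat \<times> nat) set set"
  let ?B = "if 1 \<le> r \<and> r \<le> d then {P. saturated d (r - 1) (Suc a) b P} else {}"
  let ?C = "\<Union>c\<in>{a<..<b}. join_arc a c ` ({P. saturated d (d - 1) (Suc a) c P} \<times> {P. saturated d r (Suc c) b P})"
  have unmatched: "(a, c) \<notin> P" if "P \<in> ?A \<union> ?B" for P c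
    using that saturated_bounds[of d "r - 1" "Suc a" b P a c] by (simp split: if_splits) blast
  have matched: "(a, c) \<in> join_arc a c X" for c X
    unfolding join_arc_def by (simp add: case_prod_beta)
  have "P \<notin> ?C" if "P \<in> ?A \<union> ?B" for P
    using matched unmatched[OF that] by blast
  then have disjoint_C: "(?A \<union> ?B) \<inter> ?C = {}" by blast
  have disjoint_AB: "?A \<inter> ?B = {}" by simp
  have fin: "finite ?A" "finite ?B" "finite ?C" using finite_saturated_systems by simp_all
  have "card (?A \<union> ?B \<union> ?C) = card ?A + card ?B + card ?C"
    using card_Un_disjoint[OF finite_UnI[OF fin(1,2)] fin(3) disjoint_C]
      card_Un_disjoint[OF fin(1,2) disjoint_AB] by linarith
  moreover have "card ?A = (if r = 0 \<and> a = b then 1 else 0)" by simp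
  moreover have "card ?B = (if 1 \<le> r \<and> r \<le> d then card {P. saturated d (r - 1) (Suc a) b P} else 0)"
    by simp
  ultimately show ?thesis unfolding saturated_set_eq[of d r a b] card_UN_join_arc by linarith
qed

lemma sum_over_arc_partners:
  assumes "d \<ge> 1" "r \<le> d" "b = a + r + (d + 1) * k"
  shows "(\<Sum>c\<in>{a<..<b}. card {P. saturated d (d - 1) (Suc a) c P} * g c)
    = (\<Sum>i<k. card {P. saturated d (d - 1) (Suc a) (a + d + (d + 1) * i) P} * g (a + d + (d + 1) * i))"
proof -
  define \<phi> where "\<phi> i = a + d + (d + 1) * i" for i
  have "\<phi> i \<in> {a<..<b}" if "i < k" for i
  proof -
    obtain j where "k = Suc (i + j)" using \<open>i < k\<close> less_iff_Suc_add by auto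
    then have "b = \<phi> i + r + 1 + (d + 1) * j" using assms(3) unfolding \<phi>_def by (simp add: algebra_simps)
    then show ?thesis using assms(1) unfolding \<phi>_def by simp
  qed
  then have "\<phi> ` {..<k} \<subseteq> {a<..<b}" by blast
  moreover have "card {P. saturated d (d - 1) (Suc a) c P} = 0" if "c \<in> {a<..<b} - \<phi> ` {..<k}" for c
  proof -
    have "\<not> saturated d (d - 1) (Suc a) c P" for P
    proof
      assume "saturated d (d - 1) (Suc a) c P"
      then have c: "c = \<phi> (card P)" using saturated_card assms(1) unfolding \<phi>_def by fastforce
      moreover have "c < b" using that by simp
      ultimately have "(d + 1) * card P < (d + 1) * k" using assms(2,3) unfolding \<phi>_def by linarith
      then have "card P < k" by (metis Nat.mult_less_cancel1)
      then show False using that c by blast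
    qed
    then show ?thesis by simp
  qed
  ultimately have "(\<Sum>c\<in>{a<..<b}. card {P. saturated d (d - 1) (Suc a) c P} * g c)
      = (\<Sum>c\<in>\<phi> ` {..<k}. card {P. saturated d (d - 1) (Suc a) c P} * g c)"
    by (intro sum.mono_neutral_right) auto
  also have "\<dots> = (\<Sum>i<k. card {P. saturated d (d - 1) (Suc a) (\<phi> i) P} * g (\<phi> i))"
  proof (rule sum.reindex_cong[of \<phi>])
    show "inj_on \<phi> {..<k}"
    proof (rule inj_onI)
      fix i j assume "\<phi> i = \<phi> j"
      then have "(d + 1) * i = (d + 1) * j" unfolding \<phi>_def by linarith
      then show "i = j" by (metis Nat.mult_cancel1 add_is_0 one_neq_zero)
    qed
  qed simp_all
  finally show ?thesis unfolding \<phi>_def .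
qed

lemma card_saturated:
  assumes "d \<ge> 1" "r \<le> d" "b = a + r + (d + 1) * k"
  shows "card {P. saturated d r a b P} = arc_count d r k"
  using assms(2,3)
proof (induction "b - a" arbitrary: r a b k rule: less_induct)
  case less
  let ?c = "\<lambda>i. a + d + (d + 1) * i"
  have free: "(if 1 \<le> r \<and> r \<le> d then card {P. saturated d (r - 1) (Suc a) b P} else 0)
      = (if 1 \<le> r then arc_count d (r - 1) k else 0)"
  proof (cases "1 \<le> r")
    case True
    have shorter: "b - Suc a < b - a" "r - 1 \<le> d" "b = Suc a + (r - 1) + (d + 1) * k"
      using less.prems True by auto
    show ?thesis using less.hyps[OF shorter] True less.prems(1) by simp
  qed simp
  have "card {P. saturated d (d - 1) (Suc a) (?c i) P} * card {P. saturated d r (Suc (?c i)) b P}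
      = arc_count d (d - 1) i * arc_count d r (k - 1 - i)" if "i < k" for i
  proof -
    have "?c i = Suc a + (d - 1) + (d + 1) * i" "b = Suc (?c i) + r + (d + 1) * (k - 1 - i)"
      using less.prems assms(1) that by (auto simp: algebra_simps less_iff_Suc_add)
    moreover have "?c i - Suc a < b - a" "b - Suc (?c i) < b - a"
      using calculation by simp_all
    ultimately show ?thesis
      using less.hyps[of "?c i" "Suc a" "d - 1" i] less.hyps[of b "Suc (?c i)" r "k - 1 - i"]
        less.prems(1) by simp
  qed
  then have arcs: "(\<Sum>c\<in>{a<..<b}. card {P. saturated d (d - 1) (Suc a) c P} * card {P. saturated d r (Suc c) b P})
      = (\<Sum>i<k. arc_count d (d - 1) i * arc_count d r (k - 1 - i))"
    unfolding sum_over_arc_partners[OF assms(1) less.prems] by simp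
  have "(if r = 0 \<and> a = b then 1 else 0) = (if r = 0 \<and> k = 0 then 1 else 0 :: nat)"
    using less.prems assms(1) by simp
  then show ?case
    unfolding card_saturated_recursion[of d r a b] free arcs arc_count_recursion[OF assms(1), of r k] by simp
qed

section \<open>From the polygon to the segment\<close>

text \<open>Since \<open>N + 2 = (d + 1) (n + 1)\<close>, the two sides of a diagonal contain a multiple of
  \<open>d + 1\<close> vertices (endpoints included) either both or neither, so a \<open>d\<close>-diagonal is read off
  from its smaller endpoint regardless of the wrap-around in \<open>vadd\<close>.\<close>
lemma d_diagonal_imp_d_arc:
  assumes "d \<ge> 1" "N = (d + 1) * n + d - 1" "d_diagonal N d n D"
  shows "\<exists>x y. D = {x, y} \<and> d_arc d 1 (Suc N) x y"
proof -
  obtain i j where i: "i \<in> {1..N}" and "j < n" and D: "D = {i, vadd N i (d + j * (d + 1))}"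
    using assms(3) unfolding d_diagonal_def by blast
  define k where "k = d + j * (d + 1)"
  obtain m where n: "n = Suc (j + m)" using \<open>j < n\<close> by (metis less_iff_Suc_add)
  have N: "N = (d + 1) * j + (d + 1) * m + (d + 1) + d - 1" using assms(2) n by (simp add: algebra_simps)
  have k: "k = (d + 1) * j + d" unfolding k_def by (simp add: algebra_simps)
  show ?thesis
  proof (cases "i + k \<le> N")
    case True
    then have "vadd N i k = i + k" unfolding vadd_def using i assms(1) by simp
    then have "D = {i, i + k}" using D unfolding k_def by simp
    moreover have "i + k + 1 - i = (d + 1) * Suc j" using k by simp
    then have "(d + 1) dvd (i + k + 1 - i)" by (simp only:) (rule dvd_triv_left)
    then have "d_arc d 1 (Suc N) i (i + k)" using True i k assms(1) unfolding d_arc_def by simp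
    ultimately show ?thesis by blast
  next
    case False
    have "(i - 1 + k) mod N = i - 1 + k - N"
    proof -
      have "i - 1 + k - N < N" using i N k assms(1) False by simp
      then have "(i - 1 + k - N + N) mod N = i - 1 + k - N" by simp
      moreover have "i - 1 + k - N + N = i - 1 + k" using i False by simp
      ultimately show ?thesis by simp
    qed
    then have "vadd N i k = i + k - N" unfolding vadd_def using i False by simp
    then have "D = {i + k - N, i}" using D unfolding k_def by auto
    moreover have "i + 1 - (i + k - N) = (d + 1) * Suc m" using N k False i assms(1) by simp
    then have "(d + 1) dvd (i + 1 - (i + k - N))" by (simp only:) (rule dvd_triv_left)
    then have "d_arc d 1 (Suc N) (i + k - N) i" using False i N k assms(1) unfolding d_arc_def by simp
    ultimately show ?thesis by blast
  qed
qed

lemma d_arc_imp_d_diagonal: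
  assumes "d \<ge> 1" "N = (d + 1) * n + d - 1" "d_arc d 1 (Suc N) x y"
  shows "d_diagonal N d n {x, y}"
proof -
  obtain t where t: "y + 1 - x = (d + 1) * Suc t"
  proof -
    obtain s where s: "y + 1 - x = (d + 1) * s" using assms(3) unfolding d_arc_def by (auto elim: dvdE)
    moreover have "s \<noteq> 0" using s assms(3) unfolding d_arc_def by (intro notI) simp
    ultimately show ?thesis using that not0_implies_Suc by blast
  qed
  have "y + 1 - x \<le> N" using assms(3) unfolding d_arc_def by linarith
  then have "(d + 1) * t < (d + 1) * n" using t assms(1,2) by (simp add: algebra_simps)
  then have "t < n" by (metis Nat.mult_less_cancel1)
  have "x - 1 + (d + t * (d + 1)) = y - 1" using t assms(3) unfolding d_arc_def
    by (simp add: algebra_simps)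
  moreover have "y - 1 < N" using assms(3) unfolding d_arc_def by linarith
  ultimately have "vadd N x (d + t * (d + 1)) = y" using assms(3) unfolding vadd_def d_arc_def by simp
  moreover have "x \<in> {1..N}" using assms(3) unfolding d_arc_def by simp
  ultimately show ?thesis using \<open>t < n\<close> unfolding d_diagonal_def by metis
qed

lemma crosses_doubleton_iff:
  fixes x y u v :: nat
  assumes "x < y" "u < v"
  shows "crosses {x, y} {u, v} \<longleftrightarrow> x < u \<and> u < y \<and> y < v"
proof
  assume "crosses {x, y} {u, v}"
  then obtain a b c e where "{x, y} = {a, b}" "{u, v} = {c, e}" "a < c" "c < b" "b < e"
    unfolding crosses_def by blast
  moreover from this have "a = x" "b = y" "c = u" "e = v"
    using assms by (metis doubleton_eq_iff less_asym less_trans)+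
  ultimately show "x < u \<and> u < y \<and> y < v" by simp
qed (auto simp: crosses_def)

lemma diag_disjoint_doubleton_iff:
  fixes x y u v :: nat
  assumes "x < y" "u < v"
  shows "diag_disjoint {x, y} {u, v} \<longleftrightarrow> arcs_disjoint x y u v"
  unfolding diag_disjoint_def crosses_doubleton_iff[OF assms] crosses_doubleton_iff[OF assms(2,1)]
    arcs_disjoint_def by auto

lemma d_diagonal_iff:
  assumes "d \<ge> 1" "N = (d + 1) * n + d - 1"
  shows "d_diagonal N d n D \<longleftrightarrow> (\<exists>x y. D = {x, y} \<and> d_arc d 1 (Suc N) x y)"
  using d_diagonal_imp_d_arc[OF assms] d_arc_imp_d_diagonal[OF assms] by metis

lemma doubleton_eq_ordered_iff:
  fixes x y u v :: nat
  shows "x < y \<Longrightarrow> u < v \<Longrightarrow> {x, y} = {u, v} \<longleftrightarrow> x = u \<and> y = v"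
  by (auto simp: doubleton_eq_iff)

lemma d_diagonal_doubleton_iff:
  assumes "d \<ge> 1" "N = (d + 1) * n + d - 1" "x < y"
  shows "d_diagonal N d n {x, y} \<longleftrightarrow> d_arc d 1 (Suc N) x y"
proof
  assume "d_diagonal N d n {x, y}"
  then obtain u v where "{x, y} = {u, v}" "d_arc d 1 (Suc N) u v"
    unfolding d_diagonal_iff[OF assms(1,2)] by blast
  moreover from this have "u < v" unfolding d_arc_def by simp
  ultimately show "d_arc d 1 (Suc N) x y" using doubleton_eq_ordered_iff[OF assms(3)] by metis
qed (rule d_arc_imp_d_diagonal[OF assms(1,2)])

definition undirected :: "(nat \<times> nat) set \<Rightarrow> nat set set" where
  "undirected P = (\<lambda>(x, y). {x, y}) ` P"

lemma doubleton_in_undirected_iff: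
  assumes "\<forall>x y. (x, y) \<in> P \<longrightarrow> x < y" "x < y"
  shows "{x, y} \<in> undirected P \<longleftrightarrow> (x, y) \<in> P"
proof
  assume "{x, y} \<in> undirected P"
  then obtain u v where "(u, v) \<in> P" "{x, y} = {u, v}" unfolding undirected_def by auto
  then show "(x, y) \<in> P" using doubleton_eq_ordered_iff[OF assms(2)] assms(1) by metis
qed (auto simp: undirected_def)

lemma inj_on_undirected: "inj_on undirected {P. \<forall>x y. (x, y) \<in> P \<longrightarrow> x < y}"
proof -
  have "(x, y) \<in> Q"
    if "\<forall>x y. (x, y) \<in> P \<longrightarrow> x < y" "\<forall>x y. (x, y) \<in> Q \<longrightarrow> x < y"
      "undirected P = undirected Q" "(x, y) \<in> P" for P Q x y
    using that doubleton_in_undirected_iff[of P x y] doubleton_in_undirected_iff[of Q x y] by auto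
  note contained = this
  show ?thesis
  proof (rule inj_onI)
    fix P Q assume "P \<in> {P. \<forall>x y. (x, y) \<in> P \<longrightarrow> x < y}" "Q \<in> {P. \<forall>x y. (x, y) \<in> P \<longrightarrow> x < y}"
      and eq: "undirected P = undirected Q"
    then have P: "\<forall>x y. (x, y) \<in> P \<longrightarrow> x < y" and Q: "\<forall>x y. (x, y) \<in> Q \<longrightarrow> x < y" by simp_all
    have "P \<subseteq> Q" by (rule subrelI) (rule contained[OF P Q eq])
    moreover have "Q \<subseteq> P" by (rule subrelI) (rule contained[OF Q P eq[symmetric]])
    ultimately show "P = Q" by (rule subset_antisym)
  qed
qed

lemma ball_undirected_iff: "(\<forall>D\<in>undirected P. Q D) \<longleftrightarrow> (\<forall>x y. (x, y) \<in> P \<longrightarrow> Q {x, y})"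
  unfolding undirected_def by auto


lemma brauer_relation_undirected_iff:
  assumes "d \<ge> 1" "N = (d + 1) * n + d - 1" and ordered: "\<forall>x y. (x, y) \<in> P \<longrightarrow> x < y"
  shows "brauer_relation N d n (undirected P) \<longleftrightarrow> arc_system d 1 (Suc N) P"
  using d_diagonal_doubleton_iff[OF assms(1,2)] diag_disjoint_doubleton_iff doubleton_eq_ordered_iff ordered
  unfolding brauer_relation_def arc_system_def ball_undirected_iff
  by (simp cong: imp_cong)

lemma undirected_ordered_pairs:
  assumes "d \<ge> 1" "N = (d + 1) * n + d - 1" "brauer_relation N d n R"
  shows "R = undirected {(x, y). x < y \<and> {x, y} \<in> R}"
proof (intro set_eqI iffI)
  fix D assume "D \<in> R"
  then have "d_diagonal N d n D" using assms(3) unfolding brauer_relation_def by blast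
  then obtain x y where "D = {x, y}" "x < y"
    unfolding d_diagonal_iff[OF assms(1,2)] d_arc_def by blast
  then show "D \<in> undirected {(x, y). x < y \<and> {x, y} \<in> R}"
    using \<open>D \<in> R\<close> unfolding undirected_def by auto
next
  fix D assume "D \<in> undirected {(x, y). x < y \<and> {x, y} \<in> R}"
  then show "D \<in> R" unfolding undirected_def by auto
qed

lemma maximal_brauer_relation_undirected:
  assumes "d \<ge> 1" "N = (d + 1) * n + d - 1" and max: "maximal_brauer_relation N d n R"
  shows "R = undirected {(x, y). x < y \<and> {x, y} \<in> R}"
    and "maximal_arc_system d 1 (Suc N) {(x, y). x < y \<and> {x, y} \<in> R}"
proof -
  define P where "P = {(x, y). x < y \<and> {x, y} \<in> R}"
  have rel: "brauer_relation N d n R" using max unfolding maximal_brauer_relation_def by blast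
  have ordered: "\<forall>x y. (x, y) \<in> P \<longrightarrow> x < y" unfolding P_def by simp
  show R: "R = undirected {(x, y). x < y \<and> {x, y} \<in> R}" by (rule undirected_ordered_pairs[OF assms(1,2) rel])
  show "maximal_arc_system d 1 (Suc N) {(x, y). x < y \<and> {x, y} \<in> R}"
    unfolding P_def[symmetric] maximal_arc_system_def
  proof (intro conjI allI impI notI)
    show "arc_system d 1 (Suc N) P"
      using rel R brauer_relation_undirected_iff[OF assms(1,2) ordered] unfolding P_def by simp
  next
    fix x y assume "(x, y) \<notin> P" and ext: "arc_system d 1 (Suc N) (insert (x, y) P)"
    then have "x < y" unfolding arc_system_def d_arc_def by simp
    then have "brauer_relation N d n (undirected (insert (x, y) P))"
      using ext brauer_relation_undirected_iff[OF assms(1,2), of "insert (x, y) P"] ordered by simp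
    moreover have "undirected (insert (x, y) P) = insert {x, y} R"
      using R unfolding P_def[symmetric] undirected_def by simp
    ultimately have "{x, y} \<in> R" using max unfolding maximal_brauer_relation_def by blast
    then show False using \<open>(x, y) \<notin> P\<close> \<open>x < y\<close> unfolding P_def by simp
  qed
qed

lemma maximal_arc_system_undirected:
  assumes "d \<ge> 1" "N = (d + 1) * n + d - 1" and max: "maximal_arc_system d 1 (Suc N) P"
  shows "maximal_brauer_relation N d n (undirected P)"
proof -
  have sys: "arc_system d 1 (Suc N) P" using max unfolding maximal_arc_system_def by blast
  then have ordered: "\<forall>x y. (x, y) \<in> P \<longrightarrow> x < y" by (rule arc_system_ordered)
  have "S = undirected P" if S: "brauer_relation N d n S" "undirected P \<subseteq> S" for S
  proof (rule ccontr)
    assume "S \<noteq> undirected P"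
    then obtain D where "D \<in> S" "D \<notin> undirected P" using S by blast
    then have "d_diagonal N d n D" using S(1) unfolding brauer_relation_def by blast
    then obtain x y where D: "D = {x, y}" "x < y" unfolding d_diagonal_iff[OF assms(1,2)] d_arc_def by blast
    have "(x, y) \<notin> P" using \<open>D \<notin> undirected P\<close> D unfolding undirected_def by auto
    moreover have "undirected (insert (x, y) P) \<subseteq> S" using S \<open>D \<in> S\<close> D unfolding undirected_def by auto
    then have "brauer_relation N d n (undirected (insert (x, y) P))"
      using S(1) unfolding brauer_relation_def by blast
    then have "arc_system d 1 (Suc N) (insert (x, y) P)"
      using brauer_relation_undirected_iff[OF assms(1,2), of "insert (x, y) P"] ordered \<open>x < y\<close> by simp
    ultimately show False using max unfolding maximal_arc_system_def by blast
  qed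
  moreover have "brauer_relation N d n (undirected P)"
    using sys brauer_relation_undirected_iff[OF assms(1,2) ordered] by simp
  ultimately show ?thesis unfolding maximal_brauer_relation_def by blast
qed

lemma maximal_brauer_relations_eq:
  assumes "d \<ge> 1" "N = (d + 1) * n + d - 1"
  shows "{R. maximal_brauer_relation N d n R} = undirected ` {P. maximal_arc_system d 1 (Suc N) P}"
  using maximal_brauer_relation_undirected[OF assms] maximal_arc_system_undirected[OF assms] by blast

theorem theorem8p19:
  fixes d n N :: nat
  assumes "d \<ge> 1" and "n > 0" and "N = (d + 1) * n + d - 1"
  shows "real (card {R. maximal_brauer_relation N d n R})
           = 1 / real (n + 1) * real (((d + 1) * n + d - 1) choose n)"
proof -
  have "inj_on undirected {P. maximal_arc_system d 1 (Suc N) P}"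
    by (rule inj_on_subset[OF inj_on_undirected])
      (auto simp: maximal_arc_system_def dest: arc_system_ordered)
  then have "card {R. maximal_brauer_relation N d n R} = card {P. maximal_arc_system d 1 (Suc N) P}"
    unfolding maximal_brauer_relations_eq[OF assms(1,3)] by (rule card_image)
  also have "{P. maximal_arc_system d 1 (Suc N) P} = {P. saturated d (d - 1) 1 (Suc N) P}"
  proof -
    have "Suc N - 1 = (d - 1) + (d + 1) * n" using assms(1,3) by simp
    then have "(Suc N - 1) mod (d + 1) = d - 1" using assms(1) by (simp only: mod_mult_self2) simp
    then show ?thesis using maximal_arc_system_iff_saturated[OF assms(1), of 1 "Suc N"] by simp
  qed
  also have "card \<dots> = arc_count d (d - 1) n"
    by (rule card_saturated) (use assms in simp_all)
  finally have "real (n + 1) * real (card {R. maximal_brauer_relation N d n R})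
      = real (((d + 1) * n + d - 1) choose n)"
    using arc_count_fuss_catalan[OF assms(1), of n] by (metis of_nat_mult)
  then show ?thesis by (simp add: field_simps)
qed

end
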